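(* Let $A$ be a commutative noetherian local ring, let $x,y\in A$ be a regular exact pair of zero divisors, and let $a\in A$ be weakly regular on the $A$-module $A/(x,y)$. Then there are isomorphisms of $A$-algebras $\operatorname{End}_A(G_a)\cong A\cong \operatorname{End}_A(H_a)$. In particular, $\operatorname{End}_A(G_a)$ and $\operatorname{End}_A(H_a)$ are commutative noetherian local rings, and the $A$-modules $G_a$ and $H_a$ are indecomposable.
   Context: Two non-units $x,y\in A$ form an exact pair of zero divisors if $\operatorname{Ann}_A(x)=(y)$ and $\operatorname{Ann}_A(y)=(x)$; such a pair is regular if $(x)\cap(y)=0$. An element $a\in A$ is weakly regular on a module $M$ if multiplication by $a$ on $M$ is injective. For $a\in A$, let $\gamma_a=\begin{pmatrix} x & a\\ 0 & y\end{pmatrix}$ and $\eta_a=\begin{pmatrix} y & -a\\ 0 & x\end{pmatrix}$, viewed as $A$-linear maps $A^2\to A^2$ acting on column vectors, and set $G_a=\operatorname{Coker}\gamma_a$, $H_a=\operatorname{Coker}\eta_a$. *)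

theory Defs
  imports Main
begin

definition is_ideal :: "'a::comm_ring_1 set \<Rightarrow> bool" where
  "is_ideal I \<longleftrightarrow> 0 \<in> I \<and> (\<forall>u\<in>I. \<forall>v\<in>I. u + v \<in> I) \<and> (\<forall>r. \<forall>u\<in>I. r * u \<in> I)"

definition ideal_gen :: "'a::comm_ring_1 set \<Rightarrow> 'a set" where
  "ideal_gen F = {(\<Sum>f\<in>F. c f * f) | c. True}"

definition noetherian_ring :: "'a::comm_ring_1 itself \<Rightarrow> bool" where
  "noetherian_ring _ \<longleftrightarrow>
     (\<forall>I::'a set. is_ideal I \<longrightarrow> (\<exists>F. finite F \<and> I = ideal_gen F))"

definition maximal_ideal :: "'a::comm_ring_1 set \<Rightarrow> bool" where
  "maximal_ideal m \<longleftrightarrow> is_ideal m \<and> m \<noteq> UNIV \<and>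
     (\<forall>J. is_ideal J \<and> m \<subseteq> J \<longrightarrow> J = m \<or> J = UNIV)"

definition local_ring :: "'a::comm_ring_1 itself \<Rightarrow> bool" where
  "local_ring _ \<longleftrightarrow> (\<exists>!m::'a set. maximal_ideal m)"

definition pideal :: "'a::comm_ring_1 \<Rightarrow> 'a set" where
  "pideal x = {x * r | r. True}"

definition ann :: "'a::comm_ring_1 \<Rightarrow> 'a set" where
  "ann x = {z. x * z = 0}"

definition exact_pair :: "'a::comm_ring_1 \<Rightarrow> 'a \<Rightarrow> bool" where
  "exact_pair x y \<longleftrightarrow> \<not> x dvd 1 \<and> \<not> y dvd 1 \<and> ann x = pideal y \<and> ann y = pideal x"

definition regular_exact_pair :: "'a::comm_ring_1 \<Rightarrow> 'a \<Rightarrow> bool" where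
  "regular_exact_pair x y \<longleftrightarrow> exact_pair x y \<and> pideal x \<inter> pideal y = {0}"

definition ideal2 :: "'a::comm_ring_1 \<Rightarrow> 'a \<Rightarrow> 'a set" where
  "ideal2 x y = {x * s + y * t | s t. True}"

definition weakly_regular_quot :: "'a::comm_ring_1 \<Rightarrow> 'a set \<Rightarrow> bool" where
  "weakly_regular_quot a I \<longleftrightarrow> (\<forall>b. a * b \<in> I \<longrightarrow> b \<in> I)"

definition vadd :: "'a::comm_ring_1 \<times> 'a \<Rightarrow> 'a \<times> 'a \<Rightarrow> 'a \<times> 'a" where
  "vadd v w = (fst v + fst w, snd v + snd w)"

definition vsmul :: "'a::comm_ring_1 \<Rightarrow> 'a \<times> 'a \<Rightarrow> 'a \<times> 'a" where
  "vsmul r v = (r * fst v, r * snd v)"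

text \<open>gamma_a = [[x, a],[0, y]] and eta_a = [[y, -a],[0, x]] acting on column vectors (s,t).\<close>
definition gamma :: "'a::comm_ring_1 \<Rightarrow> 'a \<Rightarrow> 'a \<Rightarrow> 'a \<times> 'a \<Rightarrow> 'a \<times> 'a" where
  "gamma x y a v = (x * fst v + a * snd v, y * snd v)"

definition eta :: "'a::comm_ring_1 \<Rightarrow> 'a \<Rightarrow> 'a \<Rightarrow> 'a \<times> 'a \<Rightarrow> 'a \<times> 'a" where
  "eta x y a v = (y * fst v - a * snd v, x * snd v)"

text \<open>Cokernel of f: A^2 \<rightarrow> A^2 is A^2/N with N = image of f; elements are cosets.\<close>
definition coset :: "('a::comm_ring_1 \<times> 'a) set \<Rightarrow> 'a \<times> 'a \<Rightarrow> ('a \<times> 'a) set" where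
  "coset N v = {vadd v n | n. n \<in> N}"

definition qcarrier :: "('a::comm_ring_1 \<times> 'a) set \<Rightarrow> ('a \<times> 'a) set set" where
  "qcarrier N = range (coset N)"

definition qadd :: "('a::comm_ring_1 \<times> 'a) set \<Rightarrow> ('a \<times> 'a) set \<Rightarrow> ('a \<times> 'a) set" where
  "qadd P R = {vadd p r | p r. p \<in> P \<and> r \<in> R}"

definition qsmul :: "('a::comm_ring_1 \<times> 'a) set \<Rightarrow> 'a \<Rightarrow> ('a \<times> 'a) set \<Rightarrow> ('a \<times> 'a) set" where
  "qsmul N r P = {vadd (vsmul r p) n | p n. p \<in> P \<and> n \<in> N}"

text \<open>End_A(A^2/N): A-linear self-maps of the quotient, extensional (undefined off the carrier).\<close>
definition qEnd :: "('a::comm_ring_1 \<times> 'a) set \<Rightarrow> (('a \<times> 'a) set \<Rightarrow> ('a \<times> 'a) set) set" where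
  "qEnd N = {\<phi>. (\<forall>q\<in>qcarrier N. \<phi> q \<in> qcarrier N)
              \<and> (\<forall>q. q \<notin> qcarrier N \<longrightarrow> \<phi> q = undefined)
              \<and> (\<forall>P\<in>qcarrier N. \<forall>R\<in>qcarrier N. \<phi> (qadd P R) = qadd (\<phi> P) (\<phi> R))
              \<and> (\<forall>r. \<forall>P\<in>qcarrier N. \<phi> (qsmul N r P) = qsmul N r (\<phi> P))}"

definition ecomp :: "('a::comm_ring_1 \<times> 'a) set \<Rightarrow> (('a \<times> 'a) set \<Rightarrow> ('a \<times> 'a) set)
     \<Rightarrow> (('a \<times> 'a) set \<Rightarrow> ('a \<times> 'a) set) \<Rightarrow> ('a \<times> 'a) set \<Rightarrow> ('a \<times> 'a) set" where
  "ecomp N \<phi> \<chi> = (\<lambda>q. if q \<in> qcarrier N then \<phi> (\<chi> q) else undefined)"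

definition eadd :: "('a::comm_ring_1 \<times> 'a) set \<Rightarrow> (('a \<times> 'a) set \<Rightarrow> ('a \<times> 'a) set)
     \<Rightarrow> (('a \<times> 'a) set \<Rightarrow> ('a \<times> 'a) set) \<Rightarrow> ('a \<times> 'a) set \<Rightarrow> ('a \<times> 'a) set" where
  "eadd N \<phi> \<chi> = (\<lambda>q. if q \<in> qcarrier N then qadd (\<phi> q) (\<chi> q) else undefined)"

definition eid :: "('a::comm_ring_1 \<times> 'a) set \<Rightarrow> ('a \<times> 'a) set \<Rightarrow> ('a \<times> 'a) set" where
  "eid N = (\<lambda>q. if q \<in> qcarrier N then q else undefined)"

definition esmul :: "('a::comm_ring_1 \<times> 'a) set \<Rightarrow> 'a
     \<Rightarrow> (('a \<times> 'a) set \<Rightarrow> ('a \<times> 'a) set) \<Rightarrow> ('a \<times> 'a) set \<Rightarrow> ('a \<times> 'a) set" where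
  "esmul N r \<phi> = (\<lambda>q. if q \<in> qcarrier N then qsmul N r (\<phi> q) else undefined)"

definition End_iso_base :: "('a::comm_ring_1 \<times> 'a) set \<Rightarrow> bool" where
  "End_iso_base N \<longleftrightarrow> (\<exists>\<psi>. bij_betw \<psi> (qEnd N) (UNIV :: 'a set)
      \<and> (\<forall>\<phi>\<in>qEnd N. \<forall>\<chi>\<in>qEnd N. \<psi> (ecomp N \<phi> \<chi>) = \<psi> \<phi> * \<psi> \<chi>)
      \<and> (\<forall>\<phi>\<in>qEnd N. \<forall>\<chi>\<in>qEnd N. \<psi> (eadd N \<phi> \<chi>) = \<psi> \<phi> + \<psi> \<chi>)
      \<and> \<psi> (eid N) = 1
      \<and> (\<forall>r. \<forall>\<phi>\<in>qEnd N. \<psi> (esmul N r \<phi>) = r * \<psi> \<phi>))"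

definition qsubmod :: "('a::comm_ring_1 \<times> 'a) set \<Rightarrow> ('a \<times> 'a) set set \<Rightarrow> bool" where
  "qsubmod N S \<longleftrightarrow> S \<subseteq> qcarrier N \<and> N \<in> S
     \<and> (\<forall>P\<in>S. \<forall>R\<in>S. qadd P R \<in> S) \<and> (\<forall>r. \<forall>P\<in>S. qsmul N r P \<in> S)"

definition indecomposable_quot :: "('a::comm_ring_1 \<times> 'a) set \<Rightarrow> bool" where
  "indecomposable_quot N \<longleftrightarrow> qcarrier N \<noteq> {N}
     \<and> (\<forall>S T. qsubmod N S \<and> qsubmod N T \<and> S \<inter> T = {N}
            \<and> (\<forall>q\<in>qcarrier N. \<exists>s\<in>S. \<exists>t\<in>T. q = qadd s t)
            \<longrightarrow> S = {N} \<or> T = {N})"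

end

theory Submission
  imports Defs "HOL-Library.Product_Plus"
begin

text \<open>An endomorphism of \<open>A\<^sup>2/N\<close> lifts to a \<open>2 \<times> 2\<close> matrix. For \<open>N = im \<gamma>\<^sub>a\<close>, the relations
  \<open>Ann x = (y)\<close>, \<open>Ann y = (x)\<close>, \<open>(x) \<inter> (y) = 0\<close> and the injectivity of \<open>a\<close> on \<open>A/(x,y)\<close> force this
  matrix to be a scalar \<open>c\<close> modulo \<open>N\<close>, and \<open>G\<^sub>a\<close> is faithful, so \<open>c\<close> is unique: \<open>End\<^sub>A(G\<^sub>a) \<cong> A\<close>.
  The projection belonging to a direct sum decomposition of \<open>G\<^sub>a\<close> is then an idempotent of the
  local ring \<open>A\<close>, hence \<open>0\<close> or \<open>1\<close>. Since \<open>\<eta>\<^sub>a\<close> is \<open>\<gamma>\<^bsub>-a\<^esub>\<close> for the exact pair \<open>(y, x)\<close>, the same holds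
  for \<open>H\<^sub>a\<close>.\<close>

section \<open>Local rings\<close>

lemma is_ideal_eq_UNIV_if_one_mem:
  assumes "is_ideal I" "1 \<in> I"
  shows "I = UNIV"
  using assms unfolding is_ideal_def by (metis UNIV_eq_I mult.right_neutral)

lemma is_ideal_pideal: "is_ideal (pideal z)"
  unfolding is_ideal_def pideal_def
proof (intro conjI ballI allI)
  show "0 \<in> {z * r |r. True}" by (auto intro: exI[of _ 0])
  fix u v assume "u \<in> {z * r |r. True}" "v \<in> {z * r |r. True}"
  then show "u + v \<in> {z * r |r. True}" by (auto simp: distrib_left[symmetric])
next
  fix r u assume "u \<in> {z * r |r. True}"
  then obtain k where "u = z * k" by blast
  then have "r * u = z * (r * k)" by (simp add: mult.left_commute)
  then show "r * u \<in> {z * r |r. True}" by blast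
qed

lemma nonunit_in_maximal_ideal:
  fixes z :: "'a::comm_ring_1"
  assumes "\<not> z dvd 1"
  shows "\<exists>M. maximal_ideal M \<and> z \<in> M"
proof -
  define \<I> where "\<I> = {I::'a set. is_ideal I \<and> z \<in> I \<and> 1 \<notin> I}"
  have "z \<in> pideal z" "1 \<notin> pideal z"
    using assms by (auto simp: pideal_def intro: exI[of _ 1] dvdI)
  then have "pideal z \<in> \<I>"
    using is_ideal_pideal unfolding \<I>_def by blast
  moreover have "\<Union>C \<in> \<I>" if "C \<in> chains \<I>" "C \<noteq> {}" for C
  proof -
    have C: "C \<subseteq> \<I>" "\<forall>A\<in>C. \<forall>B\<in>C. A \<subseteq> B \<or> B \<subseteq> A"
      using that(1) by (auto simp: chains_def chain_subset_def)
    have "u + v \<in> \<Union>C" if "u \<in> \<Union>C" "v \<in> \<Union>C" for u v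
    proof -
      obtain U V where "U \<in> C" "V \<in> C" "u \<in> U" "v \<in> V" "U \<subseteq> V \<or> V \<subseteq> U"
        using \<open>u \<in> \<Union>C\<close> \<open>v \<in> \<Union>C\<close> C(2) by blast
      then show ?thesis using C(1) unfolding \<I>_def is_ideal_def by blast
    qed
    then show ?thesis
      using C(1) that(2) unfolding \<I>_def is_ideal_def by blast
  qed
  ultimately have "\<forall>C\<in>chains \<I>. \<exists>U\<in>\<I>. \<forall>X\<in>C. X \<subseteq> U"
    by (metis Sup_upper empty_iff)
  from Zorn_Lemma2[OF this] obtain M where M: "M \<in> \<I>" and max: "\<forall>X\<in>\<I>. M \<subseteq> X \<longrightarrow> X = M"
    by blast
  have "maximal_ideal M"
    unfolding maximal_ideal_def
  proof (intro conjI allI impI)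
    show "is_ideal M" "M \<noteq> UNIV" using M by (auto simp: \<I>_def)
    fix J assume "is_ideal J \<and> M \<subseteq> J"
    then show "J = M \<or> J = UNIV"
      using M max is_ideal_eq_UNIV_if_one_mem unfolding \<I>_def by blast
  qed
  then show ?thesis using M by (auto simp: \<I>_def)
qed

lemma local_ring_nonunit_add:
  fixes u v :: "'a::comm_ring_1"
  assumes "local_ring TYPE('a)" "\<not> u dvd 1" "\<not> v dvd 1"
  shows "\<not> (u + v) dvd 1"
proof
  assume unit: "(u + v) dvd 1"
  obtain m :: "'a set" where m: "maximal_ideal m" and unique: "\<And>M. maximal_ideal M \<Longrightarrow> M = m"
    using assms(1) unfolding local_ring_def by blast
  have "u \<in> m" "v \<in> m"
    using nonunit_in_maximal_ideal[OF assms(2)] nonunit_in_maximal_ideal[OF assms(3)] unique by blast+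
  moreover have ideal: "is_ideal m" "m \<noteq> UNIV" using m by (auto simp: maximal_ideal_def)
  ultimately have "u + v \<in> m" unfolding is_ideal_def by blast
  moreover obtain k where "1 = (u + v) * k" using unit by (auto elim: dvdE)
  ultimately have "1 \<in> m" using ideal(1) unfolding is_ideal_def by (metis mult.commute)
  then show False using ideal is_ideal_eq_UNIV_if_one_mem by blast
qed

lemma local_ring_idempotent:
  fixes e :: "'a::comm_ring_1"
  assumes "local_ring TYPE('a)" "e * e = e"
  shows "e = 0 \<or> e = 1"
proof -
  have "e * (1 - e) = 0" using assms(2) by (simp add: algebra_simps)
  consider "e dvd 1" | "(1 - e) dvd 1"
    using local_ring_nonunit_add[OF assms(1), of e "1 - e"] by auto
  then show ?thesis
  proof cases
    case 1
    then obtain k where "1 = e * k" by (auto elim: dvdE)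
    then have "e = e * e * k" by (simp add: mult.assoc)
    then show ?thesis using assms(2) \<open>1 = e * k\<close> by simp
  next
    case 2
    then obtain k where "1 = (1 - e) * k" by (auto elim: dvdE)
    then have "e = e * (1 - e) * k" by (simp add: mult.assoc)
    then show ?thesis using \<open>e * (1 - e) = 0\<close> by simp
  qed
qed

lemma local_ring_nontrivial:
  assumes "local_ring TYPE('a::comm_ring_1)"
  shows "(1::'a) \<noteq> 0"
proof
  assume "(1::'a) = 0"
  moreover obtain m :: "'a set" where "maximal_ideal m"
    using assms unfolding local_ring_def by blast
  ultimately show False
    using is_ideal_eq_UNIV_if_one_mem unfolding maximal_ideal_def is_ideal_def by auto
qed

section \<open>Quotients of \<open>A\<^sup>2\<close>\<close>

lemma vadd_eq_plus: "vadd v w = v + w"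
  by (simp add: vadd_def plus_prod_def)

lemma vsmul_add_left: "vsmul (c + d) v = vsmul c v + vsmul d v"
  by (simp add: vsmul_def algebra_simps)

lemma vsmul_add_right: "vsmul c (v + w) = vsmul c v + vsmul c w"
  by (simp add: vsmul_def algebra_simps)

lemma vsmul_diff_left: "vsmul (c - d) v = vsmul c v - vsmul d v"
  by (simp add: vsmul_def algebra_simps)

lemma vsmul_vsmul: "vsmul r (vsmul c v) = vsmul (r * c) v"
  by (simp add: vsmul_def algebra_simps)

lemma vsmul_one: "vsmul 1 v = v"
  by (simp add: vsmul_def)

lemma vsmul_zero_left: "vsmul 0 v = 0"
  by (simp add: vsmul_def zero_prod_def)

lemma vsmul_minus_one: "vsmul (-1) v = - v"
  by (cases v) (simp add: vsmul_def)

locale submodule2 =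
  fixes N :: "('a::comm_ring_1 \<times> 'a) set"
  assumes zero_mem: "0 \<in> N"
    and add_mem: "v \<in> N \<Longrightarrow> w \<in> N \<Longrightarrow> v + w \<in> N"
    and vsmul_mem: "v \<in> N \<Longrightarrow> vsmul r v \<in> N"
begin

lemma diff_mem: "v \<in> N \<Longrightarrow> w \<in> N \<Longrightarrow> v - w \<in> N"
  by (metis add_mem diff_conv_add_uminus vsmul_mem vsmul_minus_one)

lemma coset_eq: "coset N v = {v + n | n. n \<in> N}"
  by (simp add: coset_def vadd_eq_plus)

lemma coset_self: "v \<in> coset N v"
  unfolding coset_eq using zero_mem by (metis (mono_tags) add.right_neutral mem_Collect_eq)

lemma coset_eq_iff: "coset N v = coset N w \<longleftrightarrow> v - w \<in> N"
proof
  assume "coset N v = coset N w"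
  then have "v \<in> coset N w" using coset_self by blast
  then obtain n where "n \<in> N" "v = w + n" unfolding coset_eq by blast
  then show "v - w \<in> N" by simp
next
  assume d: "v - w \<in> N"
  have "v + n = w + ((v - w) + n)" "w + n = v + (n - (v - w))" for n
    by (simp_all add: algebra_simps)
  then show "coset N v = coset N w"
    using add_mem[OF d] diff_mem[OF _ d] unfolding coset_eq by blast
qed

lemma coset_zero: "coset N 0 = N"
  by (force simp: coset_eq)

lemma qcarrierE:
  assumes "q \<in> qcarrier N"
  obtains v where "q = coset N v"
  using assms by (auto simp: qcarrier_def)

lemma coset_in_qcarrier [simp]: "coset N v \<in> qcarrier N"
  by (auto simp: qcarrier_def)

lemma qadd_coset [simp]: "qadd (coset N v) (coset N w) = coset N (v + w)"
proof (rule set_eqI, rule iffI)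
  fix z assume "z \<in> qadd (coset N v) (coset N w)"
  then obtain n m where "n \<in> N" "m \<in> N" "z = (v + n) + (w + m)"
    unfolding qadd_def coset_eq vadd_eq_plus by blast
  moreover have "(v + n) + (w + m) = (v + w) + (n + m)" by (simp add: algebra_simps)
  ultimately show "z \<in> coset N (v + w)" unfolding coset_eq using add_mem by blast
next
  fix z assume "z \<in> coset N (v + w)"
  then obtain n where "n \<in> N" "z = (v + n) + w" by (auto simp: coset_eq algebra_simps)
  moreover have "v + n \<in> coset N v" using \<open>n \<in> N\<close> unfolding coset_eq by blast
  ultimately show "z \<in> qadd (coset N v) (coset N w)"
    unfolding qadd_def vadd_eq_plus using coset_self by blast
qed

lemma qsmul_coset [simp]: "qsmul N r (coset N v) = coset N (vsmul r v)"
proof (rule set_eqI, rule iffI)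
  fix z assume "z \<in> qsmul N r (coset N v)"
  then obtain n m where "n \<in> N" "m \<in> N" "z = vsmul r v + (vsmul r n + m)"
    unfolding qsmul_def coset_eq vadd_eq_plus by (auto simp: vsmul_add_right algebra_simps)
  then show "z \<in> coset N (vsmul r v)" unfolding coset_eq using add_mem vsmul_mem by blast
next
  fix z assume "z \<in> coset N (vsmul r v)"
  then show "z \<in> qsmul N r (coset N v)"
    unfolding qsmul_def vadd_eq_plus coset_eq[of "vsmul r v"] using coset_self by blast
qed

lemma qEnd_on_cosets:
  assumes "\<phi> \<in> qEnd N"
  obtains p q where "\<And>v. \<phi> (coset N v) = coset N (vsmul (fst v) p + vsmul (snd v) q)"
proof -
  have closed: "\<And>P. P \<in> qcarrier N \<Longrightarrow> \<phi> P \<in> qcarrier N"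
    and additive: "\<And>P R. P \<in> qcarrier N \<Longrightarrow> R \<in> qcarrier N \<Longrightarrow> \<phi> (qadd P R) = qadd (\<phi> P) (\<phi> R)"
    and homogeneous: "\<And>r P. P \<in> qcarrier N \<Longrightarrow> \<phi> (qsmul N r P) = qsmul N r (\<phi> P)"
    using assms unfolding qEnd_def by blast+
  obtain p q where p: "\<phi> (coset N (1, 0)) = coset N p" and q: "\<phi> (coset N (0, 1)) = coset N q"
    using closed[OF coset_in_qcarrier] by (metis qcarrierE)
  have "\<phi> (coset N v) = coset N (vsmul (fst v) p + vsmul (snd v) q)" for v
  proof -
    have "coset N v = qadd (qsmul N (fst v) (coset N (1, 0))) (qsmul N (snd v) (coset N (0, 1)))"
      by (cases v) (simp add: vsmul_def)
    also have "\<phi> \<dots> = qadd (\<phi> (qsmul N (fst v) (coset N (1, 0)))) (\<phi> (qsmul N (snd v) (coset N (0, 1))))"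
      by (rule additive) simp_all
    also have "\<dots> = qadd (qsmul N (fst v) (coset N p)) (qsmul N (snd v) (coset N q))"
      by (simp only: homogeneous[OF coset_in_qcarrier] p q)
    finally show ?thesis by simp
  qed
  then show thesis by (rule that)
qed

lemma qadd_in_qcarrier: "P \<in> qcarrier N \<Longrightarrow> R \<in> qcarrier N \<Longrightarrow> qadd P R \<in> qcarrier N"
  by (auto elim!: qcarrierE)

lemma qadd_zero_right: "q \<in> qcarrier N \<Longrightarrow> qadd q N = q"
  and qadd_zero_left: "q \<in> qcarrier N \<Longrightarrow> qadd N q = q"
  by (auto elim!: qcarrierE simp del: qadd_coset simp: qadd_coset[of _ 0, simplified coset_zero]
      qadd_coset[of 0, simplified coset_zero])

lemma qadd_exchange:
  assumes "P \<in> qcarrier N" "Q \<in> qcarrier N" "R \<in> qcarrier N" "U \<in> qcarrier N"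
  shows "qadd (qadd P Q) (qadd R U) = qadd (qadd P R) (qadd Q U)"
  using assms by (elim qcarrierE) (simp add: add_ac)

lemma qsmul_qadd:
  assumes "P \<in> qcarrier N" "R \<in> qcarrier N"
  shows "qsmul N r (qadd P R) = qadd (qsmul N r P) (qsmul N r R)"
  using assms by (elim qcarrierE) (simp add: vsmul_add_right)

lemma qsubmod_subset: "qsubmod N S \<Longrightarrow> S \<subseteq> qcarrier N"
  by (simp add: qsubmod_def)

lemma qsubmod_diff_mem:
  assumes "qsubmod N S" "coset N v \<in> S" "coset N w \<in> S"
  shows "coset N (v - w) \<in> S"
proof -
  have "qadd (coset N v) (qsmul N (-1) (coset N w)) \<in> S"
    using assms unfolding qsubmod_def by blast
  then show ?thesis by (simp add: vsmul_minus_one)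
qed

lemma direct_sum_unique:
  assumes S: "qsubmod N S" and T: "qsubmod N T" and ST: "S \<inter> T = {N}"
    and "s \<in> S" "s' \<in> S" "t \<in> T" "t' \<in> T" "qadd s t = qadd s' t'"
  shows "s = s'"
proof -
  obtain \<sigma> \<sigma>' \<tau> \<tau>' where c: "s = coset N \<sigma>" "s' = coset N \<sigma>'" "t = coset N \<tau>" "t' = coset N \<tau>'"
    using assms(4-7) qsubmod_subset[OF S] qsubmod_subset[OF T] by (metis qcarrierE subsetD)
  have "coset N (\<sigma> - \<sigma>') \<in> S" using qsubmod_diff_mem[OF S] assms(4,5) c by simp
  moreover have "coset N (\<tau>' - \<tau>) \<in> T" using qsubmod_diff_mem[OF T] assms(6,7) c by simp
  moreover have "coset N (\<sigma> - \<sigma>') = coset N (\<tau>' - \<tau>)"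
    using assms(8) c by (simp add: coset_eq_iff algebra_simps)
  ultimately have "coset N (\<sigma> - \<sigma>') \<in> S \<inter> T" by (metis IntI)
  then have "coset N (\<sigma> - \<sigma>') = coset N 0" using ST by (simp add: coset_zero)
  then show ?thesis using c by (simp add: coset_eq_iff)
qed

lemma direct_sum_projection:
  assumes S: "qsubmod N S" and T: "qsubmod N T" and ST: "S \<inter> T = {N}"
    and span: "\<forall>q\<in>qcarrier N. \<exists>s\<in>S. \<exists>t\<in>T. q = qadd s t"
  shows "\<exists>\<pi>\<in>qEnd N. \<forall>s\<in>S. \<forall>t\<in>T. \<pi> (qadd s t) = s"
proof -
  define \<pi> where
    "\<pi> q = (if q \<in> qcarrier N then THE s. s \<in> S \<and> (\<exists>t\<in>T. q = qadd s t) else undefined)" for q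
  have S_closed: "\<And>P R r. P \<in> S \<Longrightarrow> R \<in> S \<Longrightarrow> qadd P R \<in> S \<and> qsmul N r P \<in> S"
    and T_closed: "\<And>P R r. P \<in> T \<Longrightarrow> R \<in> T \<Longrightarrow> qadd P R \<in> T \<and> qsmul N r P \<in> T"
    using S T unfolding qsubmod_def by blast+
  have in_qcarrier: "S \<subseteq> qcarrier N" "T \<subseteq> qcarrier N"
    using S T by (simp_all add: qsubmod_subset)
  have \<pi>_sum: "\<pi> (qadd s t) = s" if st: "s \<in> S" "t \<in> T" for s t
  proof -
    have "qadd s t \<in> qcarrier N" using st in_qcarrier by (blast intro: qadd_in_qcarrier)
    moreover have "(THE s'. s' \<in> S \<and> (\<exists>t'\<in>T. qadd s t = qadd s' t')) = s"
      using st direct_sum_unique[OF S T ST] by (intro the_equality) blast+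
    ultimately show ?thesis unfolding \<pi>_def by simp
  qed
  have "\<pi> \<in> qEnd N"
    unfolding qEnd_def
  proof (intro CollectI conjI ballI allI impI)
    fix P R assume "P \<in> qcarrier N" "R \<in> qcarrier N"
    then obtain s1 t1 s2 t2 where h: "s1 \<in> S" "t1 \<in> T" "P = qadd s1 t1" "s2 \<in> S" "t2 \<in> T" "R = qadd s2 t2"
      using span by meson
    then have "qadd P R = qadd (qadd s1 s2) (qadd t1 t2)"
      using in_qcarrier by (simp add: qadd_exchange subsetD)
    then show "\<pi> (qadd P R) = qadd (\<pi> P) (\<pi> R)" using h by (simp add: \<pi>_sum S_closed T_closed)
  next
    fix r P assume "P \<in> qcarrier N"
    then obtain s t where h: "s \<in> S" "t \<in> T" "P = qadd s t" using span by blast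
    then have "qsmul N r P = qadd (qsmul N r s) (qsmul N r t)"
      using in_qcarrier by (simp add: qsmul_qadd subsetD)
    then show "\<pi> (qsmul N r P) = qsmul N r (\<pi> P)" using h by (simp add: \<pi>_sum S_closed T_closed)
  next
    fix q assume "q \<in> qcarrier N"
    then obtain s t where "s \<in> S" "t \<in> T" "q = qadd s t" using span by blast
    then show "\<pi> q \<in> qcarrier N" using \<pi>_sum in_qcarrier by auto
  qed (simp add: \<pi>_def)
  then show ?thesis using \<pi>_sum by blast
qed

end

locale homothety_quotient = submodule2 +
  assumes qEnd_homothety: "\<phi> \<in> qEnd N \<Longrightarrow> \<exists>c. \<forall>v. \<phi> (coset N v) = coset N (vsmul c v)"
    and faithful: "(\<And>v. vsmul c v \<in> N) \<Longrightarrow> c = 0"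
begin

definition homothety :: "'a \<Rightarrow> ('a \<times> 'a) set \<Rightarrow> ('a \<times> 'a) set" where
  "homothety c q = (if q \<in> qcarrier N then qsmul N c q else undefined)"

definition homothety_factor where
  "homothety_factor \<phi> = (THE c. \<forall>v. \<phi> (coset N v) = coset N (vsmul c v))"

lemma homothety_cancel:
  assumes "\<And>v. coset N (vsmul c v) = coset N (vsmul d v)"
  shows "c = d"
  using faithful[of "c - d"] assms by (simp add: coset_eq_iff vsmul_diff_left)

lemma homothety_factor_eq:
  assumes "\<And>v. \<phi> (coset N v) = coset N (vsmul c v)"
  shows "homothety_factor \<phi> = c"
  unfolding homothety_factor_def
  using assms homothety_cancel by (intro the_equality) auto

lemma qEnd_coset:
  assumes "\<phi> \<in> qEnd N"
  shows "\<phi> (coset N v) = coset N (vsmul (homothety_factor \<phi>) v)"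
  using qEnd_homothety[OF assms] homothety_factor_eq by metis

lemma qEnd_eqI:
  assumes "\<phi> \<in> qEnd N" "\<chi> \<in> qEnd N" "homothety_factor \<phi> = homothety_factor \<chi>"
  shows "\<phi> = \<chi>"
proof
  fix q show "\<phi> q = \<chi> q"
    using assms qEnd_coset[OF assms(1)] qEnd_coset[OF assms(2)]
    by (cases "q \<in> qcarrier N") (auto elim!: qcarrierE simp: qEnd_def)
qed

lemma homothety_in_qEnd: "homothety c \<in> qEnd N"
  unfolding qEnd_def
proof (intro CollectI conjI ballI allI impI)
  fix P R assume "P \<in> qcarrier N" "R \<in> qcarrier N"
  then show "homothety c (qadd P R) = qadd (homothety c P) (homothety c R)"
    by (elim qcarrierE) (simp add: homothety_def vsmul_add_right)
next
  fix r P assume "P \<in> qcarrier N"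
  then show "homothety c (qsmul N r P) = qsmul N r (homothety c P)"
    by (elim qcarrierE) (simp add: homothety_def vsmul_vsmul mult.commute)
qed (auto simp: homothety_def qcarrier_def)

lemma homothety_factor_homothety: "homothety_factor (homothety c) = c"
  by (rule homothety_factor_eq) (simp add: homothety_def)

lemma End_iso_base: "End_iso_base N"
  unfolding End_iso_base_def
proof (intro exI[of _ homothety_factor] conjI ballI allI)
  have "c \<in> homothety_factor ` qEnd N" for c
    using homothety_in_qEnd homothety_factor_homothety by (metis image_eqI)
  then show "bij_betw homothety_factor (qEnd N) UNIV"
    unfolding bij_betw_def by (auto intro: inj_onI qEnd_eqI)
  show "homothety_factor (eid N) = 1"
    by (rule homothety_factor_eq) (simp add: eid_def vsmul_one)
  fix \<phi> \<chi> assume "\<phi> \<in> qEnd N" "\<chi> \<in> qEnd N"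
  then show "homothety_factor (ecomp N \<phi> \<chi>) = homothety_factor \<phi> * homothety_factor \<chi>"
    and "homothety_factor (eadd N \<phi> \<chi>) = homothety_factor \<phi> + homothety_factor \<chi>"
    by (auto intro!: homothety_factor_eq simp: ecomp_def eadd_def qEnd_coset vsmul_vsmul vsmul_add_left)
next
  fix r \<phi> assume "\<phi> \<in> qEnd N"
  then show "homothety_factor (esmul N r \<phi>) = r * homothety_factor \<phi>"
    by (auto intro!: homothety_factor_eq simp: esmul_def qEnd_coset vsmul_vsmul)
qed

lemma ecomp_commute:
  assumes "\<phi> \<in> qEnd N" "\<chi> \<in> qEnd N"
  shows "ecomp N \<phi> \<chi> = ecomp N \<chi> \<phi>"
proof
  fix q show "ecomp N \<phi> \<chi> q = ecomp N \<chi> \<phi> q"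
    using assms by (cases "q \<in> qcarrier N")
      (auto elim!: qcarrierE simp: ecomp_def qEnd_coset vsmul_vsmul mult.commute)
qed

lemma qcarrier_nontrivial:
  assumes "(1::'a) \<noteq> 0"
  shows "qcarrier N \<noteq> {N}"
proof
  assume "qcarrier N = {N}"
  then have "coset N v = coset N 0" for v
    using coset_in_qcarrier[of v] by (auto simp: coset_zero)
  then have "vsmul 1 v \<in> N" for v by (simp add: vsmul_one coset_eq_iff)
  then show False using faithful assms by blast
qed

lemma indecomposable_quot:
  assumes idempotent: "\<And>e::'a. e * e = e \<Longrightarrow> e = 0 \<or> e = 1" and "(1::'a) \<noteq> 0"
  shows "indecomposable_quot N"
  unfolding indecomposable_quot_def
proof (intro conjI qcarrier_nontrivial[OF assms(2)] allI impI)
  fix S T assume "qsubmod N S \<and> qsubmod N T \<and> S \<inter> T = {N}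
    \<and> (\<forall>q\<in>qcarrier N. \<exists>s\<in>S. \<exists>t\<in>T. q = qadd s t)"
  then have S: "qsubmod N S" and T: "qsubmod N T" and ST: "S \<inter> T = {N}"
    and span: "\<forall>q\<in>qcarrier N. \<exists>s\<in>S. \<exists>t\<in>T. q = qadd s t" by blast+
  obtain \<pi> where \<pi>: "\<pi> \<in> qEnd N" and \<pi>_sum: "\<And>s t. s \<in> S \<Longrightarrow> t \<in> T \<Longrightarrow> \<pi> (qadd s t) = s"
    using direct_sum_projection[OF S T ST span] by blast
  define e where "e = homothety_factor \<pi>"
  have NS: "N \<in> S" and NT: "N \<in> T" using S T by (simp_all add: qsubmod_def)
  have \<pi>_S: "\<pi> s = s" if "s \<in> S" for s
    using \<pi>_sum[OF that NT] qadd_zero_right qsubmod_subset[OF S] that by auto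
  have \<pi>_T: "\<pi> t = N" if "t \<in> T" for t
    using \<pi>_sum[OF NS that] qadd_zero_left qsubmod_subset[OF T] that by auto
  have "coset N (vsmul (e * e) v) = coset N (vsmul e v)" for v
  proof -
    obtain s t where "s \<in> S" "t \<in> T" "coset N v = qadd s t"
      using span[rule_format, OF coset_in_qcarrier] by blast
    then have "\<pi> (\<pi> (coset N v)) = \<pi> (coset N v)" by (simp add: \<pi>_sum \<pi>_S)
    then show ?thesis using \<pi> by (simp add: e_def qEnd_coset vsmul_vsmul)
  qed
  then have "e = 0 \<or> e = 1" using idempotent homothety_cancel by blast
  then show "S = {N} \<or> T = {N}"
  proof
    assume "e = 0"
    have "s = N" if s: "s \<in> S" for s
    proof -
      obtain \<sigma> where "s = coset N \<sigma>" using s qsubmod_subset[OF S] by (meson qcarrierE subsetD)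
      then show ?thesis
        using \<pi>_S[OF s] qEnd_coset[OF \<pi>] \<open>e = 0\<close> by (simp add: e_def vsmul_zero_left coset_zero)
    qed
    then show ?thesis using NS by blast
  next
    assume "e = 1"
    have "t = N" if t: "t \<in> T" for t
    proof -
      obtain \<tau> where "t = coset N \<tau>" using t qsubmod_subset[OF T] by (meson qcarrierE subsetD)
      then show ?thesis
        using \<pi>_T[OF t] qEnd_coset[OF \<pi>] \<open>e = 1\<close> by (simp add: e_def vsmul_one)
    qed
    then show ?thesis using NT by blast
  qed
qed

end

section \<open>The cokernels of \<open>\<gamma>\<^sub>a\<close> and \<open>\<eta>\<^sub>a\<close>\<close>

lemma mem_range_gamma: "v \<in> range (gamma x y a) \<longleftrightarrow> (\<exists>u w. v = (x * u + a * w, y * w))"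
  by (auto simp: gamma_def image_def)

lemma submodule2_range_gamma: "submodule2 (range (gamma x y a))"
proof
  show "0 \<in> range (gamma x y a)"
    unfolding mem_range_gamma by (auto simp: zero_prod_def intro!: exI[of _ 0])
  fix v w r assume "v \<in> range (gamma x y a)" "w \<in> range (gamma x y a)"
  then obtain u1 w1 u2 w2 where "v = (x * u1 + a * w1, y * w1)" "w = (x * u2 + a * w2, y * w2)"
    unfolding mem_range_gamma by blast
  then have "v + w = (x * (u1 + u2) + a * (w1 + w2), y * (w1 + w2))"
    and "vsmul r v = (x * (r * u1) + a * (r * w1), y * (r * w1))"
    by (simp_all add: vsmul_def algebra_simps)
  then show "v + w \<in> range (gamma x y a)" and "vsmul r v \<in> range (gamma x y a)"
    unfolding mem_range_gamma by blast+
qed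

lemma eta_eq_gamma: "eta x y a = gamma y x (- a)"
  by (rule ext) (simp add: eta_def gamma_def)

lemma regular_exact_pair_commute: "regular_exact_pair x y \<Longrightarrow> regular_exact_pair y x"
  by (auto simp: regular_exact_pair_def exact_pair_def)

lemma uminus_mem_ideal2: "u \<in> ideal2 x y \<Longrightarrow> - u \<in> ideal2 x y"
proof -
  assume "u \<in> ideal2 x y"
  then obtain s t where "u = x * s + y * t" by (auto simp: ideal2_def)
  then have "- u = x * (- s) + y * (- t)" by simp
  then show ?thesis unfolding ideal2_def by blast
qed

lemma weakly_regular_quot_ideal2_commute:
  assumes "weakly_regular_quot a (ideal2 x y)"
  shows "weakly_regular_quot (- a) (ideal2 y x)"
proof -
  have "ideal2 y x = ideal2 x y"
    unfolding ideal2_def by (metis add.commute)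
  moreover have "- a * b \<in> ideal2 x y \<longleftrightarrow> a * b \<in> ideal2 x y" for b
    using uminus_mem_ideal2[of "a * b"] uminus_mem_ideal2[of "- a * b"] by auto
  ultimately show ?thesis using assms by (simp add: weakly_regular_quot_def)
qed

locale regular_exact_pair_cokernel =
  fixes x y a :: "'a::comm_ring_1"
  assumes regular: "regular_exact_pair x y"
    and weakly_regular: "weakly_regular_quot a (ideal2 x y)"
begin

abbreviation "N \<equiv> range (gamma x y a)"

lemma mult_x_eq_0_iff: "x * z = 0 \<longleftrightarrow> (\<exists>r. z = y * r)"
  using regular by (auto simp: regular_exact_pair_def exact_pair_def ann_def pideal_def set_eq_iff)

lemma mult_y_eq_0_iff: "y * z = 0 \<longleftrightarrow> (\<exists>r. z = x * r)"
  using regular by (auto simp: regular_exact_pair_def exact_pair_def ann_def pideal_def set_eq_iff)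

lemma common_multiple_eq_0: "x * u = y * v \<Longrightarrow> x * u = 0"
  using regular unfolding regular_exact_pair_def pideal_def by blast

lemma weakly_regular_cancel: "a * b = x * s + y * t \<Longrightarrow> \<exists>\<alpha> \<beta>. b = x * \<alpha> + y * \<beta>"
  using weakly_regular unfolding weakly_regular_quot_def ideal2_def by blast

text \<open>The hypotheses say that the matrix \<open>[[p, r], [q, s]]\<close> maps the columns \<open>(x, 0)\<close> and \<open>(a, y)\<close>
  of \<open>\<gamma>\<^sub>a\<close> into \<open>N\<close>; the conclusion, that it is a scalar modulo \<open>N\<close>.\<close>

lemma scalar_modulo_range_gamma:
  assumes h1: "(x * p, x * q) \<in> N" and h2: "(a * p + y * r, a * q + y * s) \<in> N"
  shows "\<exists>c. (p - c, q) \<in> N \<and> (r, s - c) \<in> N"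
proof -
  obtain v where "x * q = y * v" using h1 by (auto simp: mem_range_gamma)
  then obtain q' where q': "q = y * q'" using common_multiple_eq_0 mult_x_eq_0_iff by metis
  obtain u2 v2 where f1: "a * p + y * r = x * u2 + a * v2" and f2: "a * q + y * s = y * v2"
    using h2 by (auto simp: mem_range_gamma)
  have "y * (a * q' + s - v2) = 0" using f2 q' by (simp add: algebra_simps)
  then obtain z where s: "s = x * z + v2 - a * q'"
    using mult_y_eq_0_iff by (metis add_diff_cancel_left' diff_add_cancel)
  define c where "c = p - a * q'"
  have "a * (c - s) = x * (u2 - a * z) + y * (- r)"
    using f1 by (simp add: c_def s algebra_simps)
  then obtain \<alpha> \<beta> where ab: "c - s = x * \<alpha> + y * \<beta>" using weakly_regular_cancel by blast
  have "y * (r + a * \<beta>) = x * (u2 - a * z - a * \<alpha>)"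
  proof -
    have "y * (r + a * \<beta>) = y * r + a * (c - s) - a * (x * \<alpha>)"
      using ab by (simp add: algebra_simps)
    also have "\<dots> = x * (u2 - a * z - a * \<alpha>)"
      using f1 by (simp add: c_def s algebra_simps)
    finally show ?thesis .
  qed
  then have "y * (r + a * \<beta>) = 0" using common_multiple_eq_0 by metis
  then obtain \<rho> where rho: "r + a * \<beta> = x * \<rho>" using mult_y_eq_0_iff by blast
  have "(p - (c - x * \<alpha>), q) = (x * \<alpha> + a * q', y * q')" "(r, s - (c - x * \<alpha>)) = (x * \<rho> + a * (- \<beta>), y * (- \<beta>))"
    using ab rho by (simp_all add: c_def q' algebra_simps)
  then show ?thesis unfolding mem_range_gamma by blast
qed

sublocale submodule2 N
  by (rule submodule2_range_gamma)

lemma qEnd_range_gamma_homothety: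
  assumes "\<phi> \<in> qEnd N"
  shows "\<exists>c. \<forall>v. \<phi> (coset N v) = coset N (vsmul c v)"
proof -
  obtain P R where lin: "\<And>v. \<phi> (coset N v) = coset N (vsmul (fst v) P + vsmul (snd v) R)"
    using qEnd_on_cosets[OF assms] by blast
  have image: "vsmul (fst n) P + vsmul (snd n) R \<in> N" if "n \<in> N" for n
  proof -
    have "coset N n = coset N 0" using that by (simp add: coset_eq_iff)
    then have "\<phi> (coset N n) = \<phi> (coset N 0)" by (rule arg_cong)
    then show ?thesis by (simp add: lin coset_eq_iff vsmul_zero_left)
  qed
  have "(x, 0) \<in> N" unfolding mem_range_gamma by (intro exI[of _ 1] exI[of _ 0]) simp
  from image[OF this] have col1: "(x * fst P, x * snd P) \<in> N"
    by (simp add: vsmul_def zero_prod_def)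
  have "(a, y) \<in> N" unfolding mem_range_gamma by (intro exI[of _ 0] exI[of _ 1]) simp
  from image[OF this] have col2: "(a * fst P + y * fst R, a * snd P + y * snd R) \<in> N"
    by (simp add: vsmul_def)
  obtain c where c: "(fst P - c, snd P) \<in> N" "(fst R, snd R - c) \<in> N"
    using scalar_modulo_range_gamma[OF col1 col2] by blast
  have "\<phi> (coset N v) = coset N (vsmul c v)" for v
  proof -
    have "vsmul (fst v) P + vsmul (snd v) R - vsmul c v
        = vsmul (fst v) (fst P - c, snd P) + vsmul (snd v) (fst R, snd R - c)"
      by (cases v) (simp add: vsmul_def algebra_simps)
    also have "\<dots> \<in> N" by (intro add_mem vsmul_mem c)
    finally show ?thesis by (simp add: lin coset_eq_iff)
  qed
  then show ?thesis by blast
qed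

lemma range_gamma_faithful:
  assumes in_N: "\<And>v. vsmul c v \<in> N"
  shows "c = 0"
proof -
  have "(c, 0) \<in> N" "(0, c) \<in> N" using in_N[of "(1, 0)"] in_N[of "(0, 1)"] by (simp_all add: vsmul_def)
  then obtain u w w2 where "c = x * u + a * w" "y * w = 0" "c = y * w2"
    unfolding mem_range_gamma by force
  moreover from \<open>y * w = 0\<close> obtain w' where "w = x * w'" using mult_y_eq_0_iff by blast
  ultimately have "c = x * (u + a * w')" "x * (u + a * w') = y * w2" by (simp_all add: algebra_simps)
  then show "c = 0" using common_multiple_eq_0 by simp
qed

sublocale homothety_quotient N
  by unfold_locales (fact qEnd_range_gamma_homothety, fact range_gamma_faithful)

end

theorem theorem4p5:
  fixes x y a :: "'a::comm_ring_1"
  assumes "noetherian_ring TYPE('a)"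
    and "local_ring TYPE('a)"
    and "regular_exact_pair x y"
    and "weakly_regular_quot a (ideal2 x y)"
  shows "End_iso_base (range (gamma x y a)) \<and> End_iso_base (range (eta x y a))
    \<and> (\<forall>\<phi>\<in>qEnd (range (gamma x y a)). \<forall>\<chi>\<in>qEnd (range (gamma x y a)).
          ecomp (range (gamma x y a)) \<phi> \<chi> = ecomp (range (gamma x y a)) \<chi> \<phi>)
    \<and> (\<forall>\<phi>\<in>qEnd (range (eta x y a)). \<forall>\<chi>\<in>qEnd (range (eta x y a)).
          ecomp (range (eta x y a)) \<phi> \<chi> = ecomp (range (eta x y a)) \<chi> \<phi>)
    \<and> indecomposable_quot (range (gamma x y a))
    \<and> indecomposable_quot (range (eta x y a))"
proof -
  interpret G: regular_exact_pair_cokernel x y a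
    using assms(3,4) by unfold_locales
  interpret H: regular_exact_pair_cokernel y x "- a"
    using regular_exact_pair_commute[OF assms(3)] weakly_regular_quot_ideal2_commute[OF assms(4)]
    by unfold_locales
  have idempotent: "\<And>e::'a. e * e = e \<Longrightarrow> e = 0 \<or> e = 1"
    using local_ring_idempotent[OF assms(2)] by blast
  note nontrivial = local_ring_nontrivial[OF assms(2)]
  show ?thesis
    unfolding eta_eq_gamma
    by (intro conjI ballI G.End_iso_base H.End_iso_base G.ecomp_commute H.ecomp_commute
        G.indecomposable_quot H.indecomposable_quot idempotent nontrivial)
qed

end
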